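(* Let $C$ be a binary linear $[n,k',d]$ code that contains its dual ($C^\perp\subseteq C$), and let the $[[n,k,d]]$ CSS code with $k=2k'-n$ be constructed from it. Then for every integer $c$ with $0\le c\le \frac{n-k}{2}=n-k'$ there is an $[[n-c,k,d;c]]_{AB}$ EAQEC code obtained from this CSS code by assigning $c$ of its qubits to Bob (deleting the corresponding columns of the $X$- and $Z$-parts of its check matrix).
   Context: CSS construction: if $C$ is a binary $[n,k',d]$ code with $C^\perp\subseteq C$ and parity check matrix $P$ (of size $(n-k')\times n$), the stabilizer group generated by the $X$-type operators $X^{r}$ and the $Z$-type operators $Z^{r}$ for the rows $r$ of $P$ defines an $[[n,2k'-n,d]]$ stabilizer code. Its check matrix can be brought to the standard form $\left[\begin{array}{cc|cc} A & I_{s\times s} & 0 & 0\\ 0&0&B& I_{(n-k-s)\times(n-k-s)}\end{array}\right]$. Pauli operators are considered up to phase; weight is the number of non-identity tensor factors. An $[[n',k,d;c]]$ entanglement-assisted (EAQEC) code: Alice and Bob share $c$ Bell pairs; Alice encodes $k$ qubits into $n'$ qubits (including her halves of the ebits). It is specified by a simplified stabilizer group $\mathcal S'$ on Alice's $n'$ qubits generated by $g'_1,h'_1,\dots,g'_c,h'_c,g'_{c+1},\dots,g'_{n'-k-c}$ with $g'_i,h'_i$ anticommuting for $i\le c$ and all other pairs commuting; the encoded state on all $n'+c$ qubits is stabilized by $g'_i\otimes Z_i$, $h'_i\otimes X_i$ ($i\le c$, acting on Bob's $i$-th qubit) and $g'_j\otimes I$ ($j>c$). Removing the columns of the last $c$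 qubits from a standard stabilizer code's check matrix whose corresponding generators are paired as $g'_i\otimes Z_i$, $h'_i\otimes X_i$ gives such a simplified group. The subscript $AB$ means the stabilizer group on all $n'+c$ qubits is that of a standard $[[n'+c,k,d]]$ stabilizer code, so the code corrects errors of weight up to $\lfloor (d-1)/2\rfloor$ on Alice's and Bob's qubits together. *)

theory Defs
  imports Main
begin

text \<open>A binary vector of length n is a function nat => bool vanishing outside {..<n}.
  Addition over GF(2) is pointwise exclusive or.\<close>

type_synonym bvec = "nat \<Rightarrow> bool"

definition vzero :: bvec where "vzero = (\<lambda>_. False)"

definition vecs :: "nat \<Rightarrow> bvec set" where
  "vecs n = {v. \<forall>i. n \<le> i \<longrightarrow> \<not> v i}"

definition vadd :: "bvec \<Rightarrow> bvec \<Rightarrow> bvec" where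
  "vadd v w = (\<lambda>i. v i \<noteq> w i)"

text \<open>GF(2) inner product of length-n vectors: True iff it equals 1.\<close>
definition bdot :: "nat \<Rightarrow> bvec \<Rightarrow> bvec \<Rightarrow> bool" where
  "bdot n v w \<longleftrightarrow> odd (card {i\<in>{..<n}. v i \<and> w i})"

definition hweight :: "nat \<Rightarrow> bvec \<Rightarrow> nat" where
  "hweight n v = card {i\<in>{..<n}. v i}"

definition linear_code :: "nat \<Rightarrow> bvec set \<Rightarrow> bool" where
  "linear_code n C \<longleftrightarrow> C \<subseteq> vecs n \<and> vzero \<in> C \<and> (\<forall>v\<in>C. \<forall>w\<in>C. vadd v w \<in> C)"

definition min_dist :: "nat \<Rightarrow> bvec set \<Rightarrow> nat \<Rightarrow> bool" where
  "min_dist n C d \<longleftrightarrow> (\<exists>v\<in>C. v \<noteq> vzero \<and> hweight n v = d) \<and>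
                       (\<forall>v\<in>C. v \<noteq> vzero \<longrightarrow> d \<le> hweight n v)"

text \<open>Binary linear [n,k,d] code: dimension k means 2^k codewords.\<close>
definition binary_code :: "nat \<Rightarrow> nat \<Rightarrow> nat \<Rightarrow> bvec set \<Rightarrow> bool" where
  "binary_code n k d C \<longleftrightarrow> linear_code n C \<and> card C = 2 ^ k \<and> min_dist n C d"

definition dual_code :: "nat \<Rightarrow> bvec set \<Rightarrow> bvec set" where
  "dual_code n C = {v \<in> vecs n. \<forall>w\<in>C. \<not> bdot n v w}"

text \<open>P is an (n-k) x n parity check matrix of C (given as its list of rows).\<close>
definition parity_check :: "nat \<Rightarrow> nat \<Rightarrow> bvec set \<Rightarrow> bvec list \<Rightarrow> bool" where
  "parity_check n k C P \<longleftrightarrow> length P = n - k \<and> set P \<subseteq> vecs n \<and>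
      C = {v \<in> vecs n. \<forall>r\<in>set P. \<not> bdot n r v}"

section \<open>Pauli operators up to phase (binary symplectic representation)\<close>

type_synonym pauli = "bvec \<times> bvec"  \<comment> \<open>(X-part, Z-part)\<close>

definition pI :: pauli where "pI = (vzero, vzero)"
definition pX :: "bvec \<Rightarrow> pauli" where "pX v = (v, vzero)"
definition pZ :: "bvec \<Rightarrow> pauli" where "pZ v = (vzero, v)"

definition pmul :: "pauli \<Rightarrow> pauli \<Rightarrow> pauli" where
  "pmul p q = (vadd (fst p) (fst q), vadd (snd p) (snd q))"

definition paulis :: "nat \<Rightarrow> pauli set" where
  "paulis n = vecs n \<times> vecs n"

definition pweight :: "nat \<Rightarrow> pauli \<Rightarrow> nat" where
  "pweight n p = card {i\<in>{..<n}. fst p i \<or> snd p i}"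

definition anticomm_on :: "nat set \<Rightarrow> pauli \<Rightarrow> pauli \<Rightarrow> bool" where
  "anticomm_on A p q \<longleftrightarrow>
     odd (card {i\<in>A. fst p i \<and> snd q i} + card {i\<in>A. snd p i \<and> fst q i})"

definition anticomm :: "nat \<Rightarrow> pauli \<Rightarrow> pauli \<Rightarrow> bool" where
  "anticomm n p q \<longleftrightarrow> anticomm_on {..<n} p q"

definition prestrict :: "nat set \<Rightarrow> pauli \<Rightarrow> pauli" where
  "prestrict B p = (\<lambda>i. i \<in> B \<and> fst p i, \<lambda>i. i \<in> B \<and> snd p i)"

inductive_set generated :: "pauli set \<Rightarrow> pauli set" for G where
  gen_id: "pI \<in> generated G"
| gen_mul: "g \<in> G \<Longrightarrow> p \<in> generated G \<Longrightarrow> pmul g p \<in> generated G"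

definition centralizer :: "nat \<Rightarrow> pauli set \<Rightarrow> pauli set" where
  "centralizer n S = {p \<in> paulis n. \<forall>s\<in>S. \<not> anticomm n p s}"

text \<open>S is the stabilizer group of an [[n,k,d]] stabilizer code (distance = minimal
  weight of an element of N(S) \ S; vacuous when that set is empty).\<close>
definition stabilizer_code :: "nat \<Rightarrow> nat \<Rightarrow> nat \<Rightarrow> pauli set \<Rightarrow> bool" where
  "stabilizer_code n k d S \<longleftrightarrow>
     S \<subseteq> paulis n \<and> (\<forall>s\<in>S. \<forall>t\<in>S. \<not> anticomm n s t) \<and> k \<le> n \<and>
     card S = 2 ^ (n - k) \<and>
     (\<forall>p\<in>centralizer n S - S. d \<le> pweight n p) \<and>
     (centralizer n S - S \<noteq> {} \<longrightarrow> (\<exists>p\<in>centralizer n S - S. pweight n p = d))"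

definition css_stabilizer :: "bvec list \<Rightarrow> pauli set" where
  "css_stabilizer P = generated ({pX r | r. r \<in> set P} \<union> {pZ r | r. r \<in> set P})"

text \<open>Generators on all n'+c qubits: g i, h i for i<c and f j for c \<le> j < n'-k
  (0-based version of g'_1,h'_1,...,g'_c,h'_c,g'_{c+1},...,g'_{n'-k}; n'-k-c isotropic generators).
  Bob's qubits form the set B, with b i being Bob's i-th qubit; Alice's qubits are
  the remaining ones in {..<n'+c}.\<close>
definition ea_gens :: "nat \<Rightarrow> nat \<Rightarrow> nat \<Rightarrow> (nat \<Rightarrow> pauli) \<Rightarrow> (nat \<Rightarrow> pauli) \<Rightarrow> (nat \<Rightarrow> pauli)
                       \<Rightarrow> pauli set" where
  "ea_gens n' k c g h f =
     {g i | i. i < c} \<union> {h i | i. i < c} \<union> {f j | j. c \<le> j \<and> j < n' - k}"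

definition eaqec_AB :: "nat \<Rightarrow> nat \<Rightarrow> nat \<Rightarrow> nat \<Rightarrow> nat set \<Rightarrow> (nat \<Rightarrow> nat)
    \<Rightarrow> (nat \<Rightarrow> pauli) \<Rightarrow> (nat \<Rightarrow> pauli) \<Rightarrow> (nat \<Rightarrow> pauli) \<Rightarrow> bool" where
  "eaqec_AB n' k d c B b g h f \<longleftrightarrow>
     (let N = n' + c; A = {..<N} - B; m = n' - k in
       k + c \<le> n' \<and>
       B \<subseteq> {..<N} \<and> card B = c \<and> bij_betw b {..<c} B \<and>
       ea_gens n' k c g h f \<subseteq> paulis N \<and>
       \<comment> \<open>Bob's parts: g'_i \<otimes> Z_i, h'_i \<otimes> X_i, g'_j \<otimes> I\<close>
       (\<forall>i<c. prestrict B (g i) = pZ (\<lambda>l. l = b i) \<and> prestrict B (h i) = pX (\<lambda>l. l = b i)) \<and>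
       (\<forall>j. c \<le> j \<and> j < m \<longrightarrow> prestrict B (f j) = pI) \<and>
       \<comment> \<open>simplified group on Alice's qubits: g'_i, h'_i anticommute, all other pairs commute\<close>
       (\<forall>i<c. anticomm_on A (g i) (h i)) \<and>
       (\<forall>i<c. \<forall>j<c. \<not> anticomm_on A (g i) (g j) \<and> \<not> anticomm_on A (h i) (h j) \<and>
                     (i \<noteq> j \<longrightarrow> \<not> anticomm_on A (g i) (h j))) \<and>
       (\<forall>i<c. \<forall>j. c \<le> j \<and> j < m \<longrightarrow>
                 \<not> anticomm_on A (g i) (f j) \<and> \<not> anticomm_on A (h i) (f j)) \<and>
       (\<forall>i j. c \<le> i \<and> i < m \<and> c \<le> j \<and> j < m \<longrightarrow> \<not> anticomm_on A (f i) (f j)) \<and>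
       \<comment> \<open>subscript AB: full group is an [[n'+c,k,d]] stabilizer code\<close>
       stabilizer_code N k d (generated (ea_gens n' k c g h f)))"

end

theory Submission
  imports Defs
begin

text \<open>The stabilizer group of the CSS code is R \<times> R, where R is the row space of P
  (X- and Z-type operators with supports in R). Counting its elements shows that the rows
  of P are independent. Gaussian elimination turns c of them into rows x_1, ..., x_c with
  pivot columns b_1, ..., b_c (x_i(b_j) = \<delta>_ij) while the other rows vanish on the pivots.
  Bob gets the pivot qubits: there Z^{x_i} and X^{x_i} act as Z and X on his i-th qubit and
  all other generators act trivially. As the whole group commutes, the (anti)commutation
  relations on Alice's qubits are those on Bob's, and the group itself, hence the
  [[n,k,d]] code on all qubits, is unchanged.\<close>

lemma vadd_vzero_left [simp]: "vadd vzero v = v"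
  by (simp add: vadd_def vzero_def)

lemma vadd_vzero_right [simp]: "vadd v vzero = v"
  by (simp add: vadd_def vzero_def)

lemma vadd_assoc: "vadd (vadd u v) w = vadd u (vadd v w)"
  by (auto simp: vadd_def fun_eq_iff)

lemma vadd_commute: "vadd u v = vadd v u"
  by (auto simp: vadd_def fun_eq_iff)

lemma vadd_cancel_right [simp]: "vadd (vadd u v) v = u"
  by (auto simp: vadd_def fun_eq_iff)

lemma vadd_cancel_left [simp]: "vadd u (vadd u v) = v"
  by (auto simp: vadd_def fun_eq_iff)

inductive_set vspan :: "bvec set \<Rightarrow> bvec set" for A where
  vspan_zero: "vzero \<in> vspan A"
| vspan_add_base: "a \<in> A \<Longrightarrow> v \<in> vspan A \<Longrightarrow> vadd a v \<in> vspan A"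

lemma vspan_base: "a \<in> A \<Longrightarrow> a \<in> vspan A"
  using vspan_add_base[OF _ vspan_zero, of a A] by simp

lemma vspan_add: "u \<in> vspan A \<Longrightarrow> v \<in> vspan A \<Longrightarrow> vadd u v \<in> vspan A"
  by (induction u rule: vspan.induct) (auto simp: vadd_assoc intro: vspan_add_base)

lemma vspan_subset_closed:
  assumes "vzero \<in> C" and "\<forall>v\<in>C. \<forall>w\<in>C. vadd v w \<in> C" and "A \<subseteq> C"
  shows "vspan A \<subseteq> C"
proof
  fix x assume "x \<in> vspan A"
  then show "x \<in> C" by induction (use assms in auto)
qed

lemma vspan_subset_vspan: "A \<subseteq> vspan B \<Longrightarrow> vspan A \<subseteq> vspan B"
  by (rule vspan_subset_closed) (auto intro: vspan_zero vspan_add)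

lemma vspan_eqI: "A \<subseteq> vspan B \<Longrightarrow> B \<subseteq> vspan A \<Longrightarrow> vspan A = vspan B"
  using vspan_subset_vspan by blast

lemma vspan_empty: "vspan {} = {vzero}"
  using vspan_subset_closed[of "{vzero}" "{}"] by (auto intro: vspan_zero)

lemma vspan_insert_subset: "vspan (insert a A) \<subseteq> vspan A \<union> vadd a ` vspan A"
proof
  fix x assume "x \<in> vspan (insert a A)"
  then show "x \<in> vspan A \<union> vadd a ` vspan A"
  proof induction
    case vspan_zero
    then show ?case by (simp add: vspan.vspan_zero)
  next
    case (vspan_add_base b v)
    consider "v \<in> vspan A" | w where "w \<in> vspan A" "v = vadd a w"
      using vspan_add_base.IH by blast
    then show ?case
    proof cases
      case 1
      then show ?thesis
        using vspan_add_base.hyps(1) by (auto intro: vspan.vspan_add_base)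
    next
      case 2
      then have "vadd b v = vadd a (vadd b w)" by (metis vadd_assoc vadd_commute)
      then show ?thesis
        using vspan_add_base.hyps(1) 2 by (auto intro: vspan.vspan_add_base)
    qed
  qed
qed

lemma vspan_card_le:
  assumes "finite A"
  shows "finite (vspan A) \<and> card (vspan A) \<le> 2 ^ card A"
  using assms
proof (induction rule: finite_induct)
  case empty
  then show ?case by (simp add: vspan_empty)
next
  case (insert a A)
  have fin: "finite (vspan A \<union> vadd a ` vspan A)" using insert by simp
  have "card (vspan (insert a A)) \<le> card (vspan A \<union> vadd a ` vspan A)"
    using card_mono[OF fin vspan_insert_subset] .
  also have "\<dots> \<le> card (vspan A) + card (vadd a ` vspan A)" by (rule card_Un_le)
  also have "\<dots> \<le> 2 * card (vspan A)" using card_image_le[of "vspan A" "vadd a"] insert by simp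
  also have "\<dots> \<le> 2 ^ card (insert a A)" using insert by simp
  finally show ?case using fin vspan_insert_subset finite_subset by blast
qed

subsection \<open>Reduction to pivot form\<close>

definition reduced_form :: "nat \<Rightarrow> (nat \<Rightarrow> nat) \<Rightarrow> (nat \<Rightarrow> bvec) \<Rightarrow> bvec list \<Rightarrow> bool" where
  "reduced_form c piv xs K \<longleftrightarrow>
     (\<forall>i<c. \<forall>j<c. xs i (piv j) = (i = j)) \<and> (\<forall>v\<in>set K. \<forall>j<c. \<not> v (piv j))"

definition reduce_at :: "bvec \<Rightarrow> nat \<Rightarrow> bvec \<Rightarrow> bvec" where
  "reduce_at k b v = (if v b then vadd v k else v)"

lemma reduce_at_pivot: "k b \<Longrightarrow> \<not> reduce_at k b v b"
  by (simp add: reduce_at_def vadd_def)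

lemma reduce_at_outside: "\<not> k j \<Longrightarrow> reduce_at k b v j = v j"
  by (simp add: reduce_at_def vadd_def)

lemma vspan_insert_reduce_at: "vspan (insert k (reduce_at k b ` A)) = vspan (insert k A)"
proof (rule vspan_eqI)
  have "k \<in> vspan (insert k A)" by (simp add: vspan_base)
  then show "insert k (reduce_at k b ` A) \<subseteq> vspan (insert k A)"
    by (auto simp: reduce_at_def intro: vspan_base vspan_add)
  have k: "k \<in> vspan (insert k (reduce_at k b ` A))" by (simp add: vspan_base)
  have "v \<in> vspan (insert k (reduce_at k b ` A))" if "v \<in> A" for v
  proof -
    have r: "reduce_at k b v \<in> vspan (insert k (reduce_at k b ` A))"
      using that by (simp add: vspan_base)
    show ?thesis
    proof (cases "v b")
      case True
      then have "v = vadd (reduce_at k b v) k" by (simp add: reduce_at_def)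
      then show ?thesis using vspan_add[OF r k] by simp
    next
      case False
      then show ?thesis using r by (simp add: reduce_at_def)
    qed
  qed
  then show "insert k A \<subseteq> vspan (insert k (reduce_at k b ` A))"
    using k by blast
qed

lemma reduced_form_extend:
  assumes red: "reduced_form c piv xs K" and kK: "k \<in> set K" and kb: "k b"
  defines "xs' \<equiv> \<lambda>i. if i = c then k else reduce_at k b (xs i)"
    and "K' \<equiv> map (reduce_at k b) (remove1 k K)"
  shows "reduced_form (Suc c) (piv(c := b)) xs' K'"
    and "vspan (xs' ` {..<Suc c} \<union> set K') = vspan (xs ` {..<c} \<union> set K)"
proof -
  have k_piv: "\<not> k (piv j)" if "j < c" for j
    using red kK that unfolding reduced_form_def by blast
  show "reduced_form (Suc c) (piv(c := b)) xs' K'"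
    using red kb k_piv set_remove1_subset[of k K]
    by (auto simp: reduced_form_def xs'_def K'_def less_Suc_eq reduce_at_pivot
                   reduce_at_outside)
  have "set K = insert k (set (remove1 k K))"
    using kK set_remove1_subset[of k K] in_set_remove1[of _ k K] by blast
  then have "xs ` {..<c} \<union> set K = insert k (xs ` {..<c} \<union> set (remove1 k K))"
    by blast
  moreover have "xs' ` {..<Suc c} \<union> set K' =
      insert k (reduce_at k b ` (xs ` {..<c} \<union> set (remove1 k K)))"
    by (auto simp: xs'_def K'_def lessThan_Suc image_Un image_image)
  ultimately show "vspan (xs' ` {..<Suc c} \<union> set K') = vspan (xs ` {..<c} \<union> set K)"
    by (simp add: vspan_insert_reduce_at)
qed

text \<open>Elimination can always continue: if the remaining generators were all zero,
  the span would have at most 2^c elements.\<close>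

lemma reduced_form_exists:
  assumes indep: "card (vspan (set Q)) = 2 ^ length Q" and "c \<le> length Q"
  shows "\<exists>piv xs K. reduced_form c piv xs K \<and> length K = length Q - c \<and>
           vspan (xs ` {..<c} \<union> set K) = vspan (set Q)"
  using \<open>c \<le> length Q\<close>
proof (induction c)
  case 0
  show ?case by (rule exI[of _ undefined], rule exI[of _ undefined], rule exI[of _ Q])
      (simp add: reduced_form_def)
next
  case (Suc c)
  then obtain piv xs K where red: "reduced_form c piv xs K"
    and len: "length K = length Q - c" and span: "vspan (xs ` {..<c} \<union> set K) = vspan (set Q)"
    by auto
  have "\<exists>k\<in>set K. k \<noteq> vzero"
  proof (rule ccontr)
    assume "\<not> ?thesis"
    then have "vspan (xs ` {..<c} \<union> set K) = vspan (xs ` {..<c})"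
      by (intro vspan_eqI) (auto intro: vspan_base vspan_zero)
    then have "card (vspan (set Q)) \<le> 2 ^ card (xs ` {..<c})"
      using span vspan_card_le[of "xs ` {..<c}"] by simp
    also have "\<dots> \<le> 2 ^ c"
      using card_image_le[of "{..<c}" xs] by simp
    also have "\<dots> < 2 ^ length Q" using Suc.prems by simp
    finally show False using indep by simp
  qed
  then obtain k b where kK: "k \<in> set K" and "k b" by (auto simp: vzero_def fun_eq_iff)
  from reduced_form_extend[OF red this] len span Suc.prems kK show ?case
    by (intro exI) (auto simp: length_remove1)
qed

lemma generated_base: "g \<in> G \<Longrightarrow> g \<in> generated G"
  using gen_mul[OF _ gen_id, of g G] by (simp add: pmul_def pI_def)

lemma generated_pX_pZ: "generated (pX ` A \<union> pZ ` A') = vspan A \<times> vspan A'"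
proof
  show "generated (pX ` A \<union> pZ ` A') \<subseteq> vspan A \<times> vspan A'"
  proof
    fix p assume "p \<in> generated (pX ` A \<union> pZ ` A')"
    then show "p \<in> vspan A \<times> vspan A'"
      by induction (auto simp: pI_def pmul_def pX_def pZ_def intro: vspan_zero vspan_add_base)
  qed
  show "vspan A \<times> vspan A' \<subseteq> generated (pX ` A \<union> pZ ` A')"
  proof clarify
    fix u v assume u: "u \<in> vspan A" and v: "v \<in> vspan A'"
    from v have "(vzero, v) \<in> generated (pX ` A \<union> pZ ` A')"
    proof induction
      case vspan_zero
      then show ?case using gen_id by (simp add: pI_def)
    next
      case (vspan_add_base a w)
      then have "pmul (pZ a) (vzero, w) \<in> generated (pX ` A \<union> pZ ` A')"
        by (intro gen_mul) auto
      then show ?case by (simp add: pmul_def pZ_def)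
    qed
    with u show "(u, v) \<in> generated (pX ` A \<union> pZ ` A')"
    proof induction
      case vspan_zero
      then show ?case by simp
    next
      case (vspan_add_base a w)
      then have "pmul (pX a) (w, v) \<in> generated (pX ` A \<union> pZ ` A')"
        by (intro gen_mul) auto
      then show ?case by (simp add: pmul_def pX_def)
    qed
  qed
qed

lemma css_stabilizer_eq: "css_stabilizer P = vspan (set P) \<times> vspan (set P)"
proof -
  have "{pX r |r. r \<in> set P} \<union> {pZ r |r. r \<in> set P} = pX ` set P \<union> pZ ` set P" by auto
  then show ?thesis by (simp add: css_stabilizer_def generated_pX_pZ)
qed

lemma anticomm_on_Un:
  assumes "A \<inter> B = {}" and "finite A" and "finite B"
  shows "anticomm_on (A \<union> B) p q \<longleftrightarrow> anticomm_on A p q \<noteq> anticomm_on B p q"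
proof -
  have card_Un: "card {i\<in>A \<union> B. R i} = card {i\<in>A. R i} + card {i\<in>B. R i}" for R
  proof -
    have "{i\<in>A \<union> B. R i} = {i\<in>A. R i} \<union> {i\<in>B. R i}" by auto
    then show ?thesis using assms by (simp add: card_Un_disjoint disjoint_iff)
  qed
  show ?thesis
    unfolding anticomm_on_def card_Un by presburger
qed

lemma anticomm_on_Diff:
  assumes "\<not> anticomm n p q" and "B \<subseteq> {..<n}"
  shows "anticomm_on ({..<n} - B) p q \<longleftrightarrow> anticomm_on B p q"
proof -
  have "anticomm_on (({..<n} - B) \<union> B) p q \<longleftrightarrow>
      anticomm_on ({..<n} - B) p q \<noteq> anticomm_on B p q"
    using finite_subset[OF assms(2)] by (intro anticomm_on_Un) auto
  moreover have "({..<n} - B) \<union> B = {..<n}" using assms(2) by blast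
  ultimately show ?thesis using assms(1) by (simp add: anticomm_def)
qed

lemma anticomm_on_pZ_pX: "anticomm_on B (pZ x) (pX y) \<longleftrightarrow> odd (card {i\<in>B. x i \<and> y i})"
  by (simp add: anticomm_on_def pX_def pZ_def vzero_def)

lemma anticomm_on_pZ_pZ: "\<not> anticomm_on B (pZ x) (pZ y)"
  by (simp add: anticomm_on_def pZ_def vzero_def)

lemma anticomm_on_pX_pX: "\<not> anticomm_on B (pX x) (pX y)"
  by (simp add: anticomm_on_def pX_def vzero_def)

lemma anticomm_on_vanishing:
  assumes "\<forall>i\<in>B. \<not> fst q i \<and> \<not> snd q i"
  shows "\<not> anticomm_on B p q" and "\<not> anticomm_on B q p"
proof -
  have empty: "{i\<in>B. R i \<and> fst q i} = {}" "{i\<in>B. R i \<and> snd q i} = {}"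
    "{i\<in>B. fst q i \<and> R i} = {}" "{i\<in>B. snd q i \<and> R i} = {}" for R
    using assms by auto
  show "\<not> anticomm_on B p q" and "\<not> anticomm_on B q p"
    unfolding anticomm_on_def empty by simp_all
qed

subsection \<open>Entanglement-assisted codes from a CSS code\<close>

text \<open>The generators g'_{c+1}, ..., g'_{n'-k}: first X^v, then Z^v, for the rows v of K.\<close>

definition isotropic_gens :: "nat \<Rightarrow> bvec list \<Rightarrow> nat \<Rightarrow> pauli" where
  "isotropic_gens c K j =
     (if j - c < length K then pX (K ! (j - c)) else pZ (K ! (j - c - length K)))"

lemma isotropic_gens_range:
  "{isotropic_gens c K j |j. c \<le> j \<and> j < c + 2 * length K} = pX ` set K \<union> pZ ` set K"
proof
  show "{isotropic_gens c K j |j. c \<le> j \<and> j < c + 2 * length K} \<subseteq> pX ` set K \<union> pZ ` set K"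
    by (auto simp: isotropic_gens_def)
  have "pX (K ! t) = isotropic_gens c K (c + t)" "pZ (K ! t) = isotropic_gens c K (c + length K + t)"
    if "t < length K" for t
    using that by (simp_all add: isotropic_gens_def)
  then show "pX ` set K \<union> pZ ` set K \<subseteq> {isotropic_gens c K j |j. c \<le> j \<and> j < c + 2 * length K}"
    by (fastforce simp: in_set_conv_nth)
qed

lemma ea_gens_reduced:
  assumes "n' - k = c + 2 * length K"
  shows "ea_gens n' k c (\<lambda>i. pZ (xs i)) (\<lambda>i. pX (xs i)) (isotropic_gens c K) =
           pX ` (xs ` {..<c} \<union> set K) \<union> pZ ` (xs ` {..<c} \<union> set K)"
  unfolding ea_gens_def assms isotropic_gens_range by auto

lemma reduced_form_inj_on: "reduced_form c piv xs K \<Longrightarrow> inj_on piv {..<c}"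
  by (rule inj_onI) (metis lessThan_iff reduced_form_def)

lemma reduced_form_at_pivots:
  assumes "reduced_form c piv xs K" and "l \<in> piv ` {..<c}"
  shows "i < c \<Longrightarrow> xs i l \<longleftrightarrow> l = piv i"
    and "v \<in> set K \<Longrightarrow> \<not> v l"
  using assms by (auto simp: reduced_form_def)

lemma reduced_form_anticomm_on_pivots:
  assumes red: "reduced_form c piv xs K" and "i < c" and "j < c"
  shows "anticomm_on (piv ` {..<c}) (pZ (xs i)) (pX (xs j)) \<longleftrightarrow> i = j"
proof -
  have "{l \<in> piv ` {..<c}. xs i l \<and> xs j l} = (if i = j then {piv i} else {})"
    using reduced_form_at_pivots(1)[OF red] reduced_form_inj_on[OF red] assms(2,3)
    by (auto simp: inj_on_eq_iff)
  then show ?thesis by (simp add: anticomm_on_pZ_pX)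
qed

lemma isotropic_gens_vanish_at_pivots:
  assumes "reduced_form c piv xs K" and "c \<le> j" and "j < c + 2 * length K"
    and "l \<in> piv ` {..<c}"
  shows "\<not> fst (isotropic_gens c K j) l \<and> \<not> snd (isotropic_gens c K j) l"
proof -
  obtain v where "v \<in> set K" "isotropic_gens c K j \<in> {pX v, pZ v}"
    using assms(2,3) isotropic_gens_range[of c K] by blast
  then show ?thesis
    using reduced_form_at_pivots(2)[OF assms(1,4)] by (fastforce simp: pX_def pZ_def vzero_def)
qed

lemma eaqec_AB_of_reduced_form:
  fixes c :: nat and xs :: "nat \<Rightarrow> bvec" and K :: "bvec list"
  defines "G \<equiv> xs ` {..<c} \<union> set K"
  assumes red: "reduced_form c piv xs K"
    and code: "stabilizer_code (n' + c) k d (vspan G \<times> vspan G)"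
    and dim: "n' - k = c + 2 * length K"
  shows "eaqec_AB n' k d c (piv ` {..<c}) piv (\<lambda>i. pZ (xs i)) (\<lambda>i. pX (xs i)) (isotropic_gens c K)"
proof -
  let ?N = "n' + c" and ?B = "piv ` {..<c}" and ?S = "vspan G \<times> vspan G"
  let ?gens = "ea_gens n' k c (\<lambda>i. pZ (xs i)) (\<lambda>i. pX (xs i)) (isotropic_gens c K)"
  have gens: "?gens = pX ` G \<union> pZ ` G"
    unfolding G_def using dim by (rule ea_gens_reduced)
  then have generated_gens: "generated ?gens = ?S"
    by (simp add: generated_pX_pZ)
  then have gens_S: "?gens \<subseteq> ?S"
    using generated_base by blast
  have S_paulis: "?S \<subseteq> paulis ?N" and S_comm: "\<forall>p\<in>?S. \<forall>q\<in>?S. \<not> anticomm ?N p q"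
    using code by (simp_all add: stabilizer_code_def)
  have gens_mem: "pZ (xs i) \<in> ?gens" "pX (xs i) \<in> ?gens" if "i < c" for i
    using that gens by (auto simp: G_def)
  have "xs i \<in> vecs ?N" if "i < c" for i
  proof -
    have "pX (xs i) \<in> paulis ?N" using gens_mem(2)[OF that] gens_S S_paulis by blast
    then show ?thesis by (simp add: paulis_def pX_def)
  qed
  moreover have "xs i (piv i)" if "i < c" for i
    using red that by (simp add: reduced_form_def)
  ultimately have B_sub: "?B \<subseteq> {..<?N}"
    by (force simp: vecs_def not_less[symmetric])
  have alice: "anticomm_on ({..<?N} - ?B) p q \<longleftrightarrow> anticomm_on ?B p q"
    if "p \<in> ?gens" "q \<in> ?gens" for p q
  proof -
    have "\<not> anticomm ?N p q" using that gens_S S_comm by blast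
    then show ?thesis using B_sub by (rule anticomm_on_Diff)
  qed
  have tail_mem: "isotropic_gens c K j \<in> ?gens" if "c \<le> j" "j < c + 2 * length K" for j
    using that dim by (auto simp: ea_gens_def)
  have tail_vanish: "\<forall>l\<in>?B. \<not> fst (isotropic_gens c K j) l \<and> \<not> snd (isotropic_gens c K j) l"
    if "c \<le> j" "j < c + 2 * length K" for j
    using isotropic_gens_vanish_at_pivots[OF red that] by blast
  note tail_comm = anticomm_on_vanishing[OF tail_vanish]
  show ?thesis
    unfolding eaqec_AB_def Let_def dim
  proof (intro conjI)
    have "k \<le> n' + c" using code by (simp add: stabilizer_code_def)
    then show "k + c \<le> n'" using dim by arith
    show "?B \<subseteq> {..<?N}" by (rule B_sub)
    show "bij_betw piv {..<c} ?B" and "card ?B = c"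
      using reduced_form_inj_on[OF red] by (simp_all add: bij_betw_def card_image)
    show "?gens \<subseteq> paulis ?N" using gens_S S_paulis by blast
    show "stabilizer_code ?N k d (generated ?gens)" using code generated_gens by simp
    show "\<forall>i<c. prestrict ?B (pZ (xs i)) = pZ (\<lambda>l. l = piv i) \<and>
                prestrict ?B (pX (xs i)) = pX (\<lambda>l. l = piv i)"
      using reduced_form_at_pivots(1)[OF red]
      by (auto simp: prestrict_def pX_def pZ_def vzero_def fun_eq_iff)
    show "\<forall>j. c \<le> j \<and> j < c + 2 * length K \<longrightarrow> prestrict ?B (isotropic_gens c K j) = pI"
      using tail_vanish by (auto simp: prestrict_def pI_def vzero_def fun_eq_iff prod_eq_iff)
    show "\<forall>i<c. anticomm_on ({..<?N} - ?B) (pZ (xs i)) (pX (xs i))"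
      using alice[OF gens_mem] reduced_form_anticomm_on_pivots[OF red] by simp
    show "\<forall>i<c. \<forall>j<c. \<not> anticomm_on ({..<?N} - ?B) (pZ (xs i)) (pZ (xs j)) \<and>
        \<not> anticomm_on ({..<?N} - ?B) (pX (xs i)) (pX (xs j)) \<and>
        (i \<noteq> j \<longrightarrow> \<not> anticomm_on ({..<?N} - ?B) (pZ (xs i)) (pX (xs j)))"
      using alice[OF gens_mem] reduced_form_anticomm_on_pivots[OF red]
      by (simp add: anticomm_on_pZ_pZ anticomm_on_pX_pX)
    show "\<forall>i<c. \<forall>j. c \<le> j \<and> j < c + 2 * length K \<longrightarrow>
        \<not> anticomm_on ({..<?N} - ?B) (pZ (xs i)) (isotropic_gens c K j) \<and>
        \<not> anticomm_on ({..<?N} - ?B) (pX (xs i)) (isotropic_gens c K j)"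
      using alice[OF gens_mem(1) tail_mem] alice[OF gens_mem(2) tail_mem] tail_comm by simp
    show "\<forall>i j. c \<le> i \<and> i < c + 2 * length K \<and> c \<le> j \<and> j < c + 2 * length K \<longrightarrow>
        \<not> anticomm_on ({..<?N} - ?B) (isotropic_gens c K i) (isotropic_gens c K j)"
      using alice[OF tail_mem tail_mem] tail_comm by simp
  qed
qed

lemma parity_rows_in_code:
  assumes "parity_check n k' C P" and "dual_code n C \<subseteq> C"
  shows "set P \<subseteq> C"
proof
  fix r assume "r \<in> set P"
  with assms(1) have "r \<in> dual_code n C" by (auto simp: parity_check_def dual_code_def)
  with assms(2) show "r \<in> C" by blast
qed

text \<open>Since the stabilizer group is R \<times> R for the row space R \<subseteq> C, comparing
  |R|^2 = 2^{2n-2k'} with |R| \<le> |C| = 2^{k'} forces n \<le> 2k' and |R| = 2^{n-k'}: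
  the rows of P are linearly independent.\<close>

lemma css_row_space_card:
  assumes "binary_code n k' d C" and "dual_code n C \<subseteq> C" and "parity_check n k' C P"
    and "stabilizer_code n (2 * k' - n) d (css_stabilizer P)"
  shows "card (vspan (set P)) = 2 ^ length P" and "n \<le> 2 * k'"
proof -
  let ?r = "card (vspan (set P))"
  have C: "linear_code n C" "card C = 2 ^ k'" using assms(1) by (simp_all add: binary_code_def)
  have "vspan (set P) \<subseteq> C"
    using C(1) parity_rows_in_code[OF assms(3,2)] by (intro vspan_subset_closed) (simp_all add: linear_code_def)
  moreover have "finite C" using C(2) by (intro card_ge_0_finite) simp
  ultimately have r_le: "?r \<le> 2 ^ k'" using C(2) card_mono by metis
  have r_sq: "?r ^ 2 = 2 ^ (n - (2 * k' - n))" and k_le: "2 * k' - n \<le> n"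
    using assms(4) by (simp_all add: stabilizer_code_def css_stabilizer_eq card_cartesian_product power2_eq_square)
  have "?r ^ 2 \<le> 2 ^ (2 * k')"
    using power_mono[OF r_le, of 2] by (simp add: power_mult[symmetric] mult.commute)
  then show n_le: "n \<le> 2 * k'" using r_sq by (cases "n \<le> 2 * k'") auto
  then have "?r ^ 2 = (2 ^ (n - k')) ^ 2"
    using r_sq k_le by (simp add: power_mult[symmetric] mult.commute)
  then have "?r = 2 ^ (n - k')" by (simp add: power2_eq_iff_nonneg)
  then show "?r = 2 ^ length P" using assms(3) by (simp add: parity_check_def)
qed

theorem theorem2:
  fixes n k' d :: nat and C :: "bvec set" and P :: "bvec list"
  assumes "binary_code n k' d C"
    and "dual_code n C \<subseteq> C"
    and "parity_check n k' C P"
    and "stabilizer_code n (2 * k' - n) d (css_stabilizer P)"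
  shows "\<forall>c::nat. c \<le> n - k' \<longrightarrow>
           (\<exists>B b g h f. eaqec_AB (n - c) (2 * k' - n) d c B b g h f \<and>
              generated (ea_gens (n - c) (2 * k' - n) c g h f) = css_stabilizer P)"
proof (intro allI impI)
  fix c assume c: "c \<le> n - k'"
  have lenP: "length P = n - k'" using assms(3) by (simp add: parity_check_def)
  note indep = css_row_space_card[OF assms]
  from c lenP have "c \<le> length P" by simp
  then obtain piv xs K where red: "reduced_form c piv xs K" and lenK: "length K = length P - c"
    and span: "vspan (xs ` {..<c} \<union> set K) = vspan (set P)"
    using reduced_form_exists[OF indep(1)] by blast
  have k_le: "2 * k' - n \<le> n" using assms(4) by (simp add: stabilizer_code_def)
  have dim: "n - c - (2 * k' - n) = c + 2 * length K"
    using c lenP lenK indep(2) k_le by arith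
  have code: "stabilizer_code (n - c + c) (2 * k' - n) d
      (vspan (xs ` {..<c} \<union> set K) \<times> vspan (xs ` {..<c} \<union> set K))"
    using assms(4) c span by (simp add: css_stabilizer_eq)
  show "\<exists>B b g h f. eaqec_AB (n - c) (2 * k' - n) d c B b g h f \<and>
      generated (ea_gens (n - c) (2 * k' - n) c g h f) = css_stabilizer P"
    using eaqec_AB_of_reduced_form[OF red code dim] ea_gens_reduced[OF dim]
    by (intro exI conjI) (auto simp: generated_pX_pZ span css_stabilizer_eq)
qed

end
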